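(* For all $n,d,w\in\mathbb{N}$, $B_3(n,d,w)=A_2(n,d,w)$.
   Context: Notation: $\mathbb{F}_2=\{0,1\}$. For a code $S\subseteq\mathbb{F}_2^n$, $d_{\min}(S)$ is the minimum Hamming distance between distinct words of $S$ ($+\infty$ if $|S|\le 1$). Let $F\subseteq\mathbb{F}_2^n$ be the set of words of weight $w$. For $k\in\mathbb{Z}_{\ge 0}$, $\mathcal{C}_k$ is the set of codes $C\subseteq F$ with $|C|\le k$. For $j\le k$ and $D\in\mathcal{C}_j$, $\mathcal{C}_j(D):=\{C\in\mathcal{C}_j : C\supseteq D,\ |D|+2|C\setminus D|\le j\}$. For $x:\mathcal{C}_k\to\mathbb{R}$, $M_{j,D}(x)$ is the $\mathcal{C}_j(D)\times\mathcal{C}_j(D)$ matrix with entries $x(C\cup C')$. $A_k(n,d,w)$ is the supremum of $\sum_{v\in F}x(\{v\})$ over all $x:\mathcal{C}_k\to\mathbb{R}$ with $x(\emptyset)=1$, $x(S)=0$ whenever $d_{\min}(S)<d$, and $M_{k,D}(x)$ positive semidefinite for every $D\in\mathcal{C}_k$. For $k\ge 3$, $B_k(n,d,w)$ is the supremum of $\sum_{v\in F}x(\{v\})$ over all $x:\mathcal{C}_k\to\mathbb{R}$ with $x(\emptyset)=1$, $x(S)=0$ whenever $d_{\min}(S)<d$, $M_{k-1,D}(x)$ positive semidefinite for every $D\in\mathcal{C}_{k-1}$ with $|D|<2$, and $M_{k,D}(x)$ positive semidefinite for every $D\in\mathcal{C}_k$ with $|D|\ge 2$. *)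

theory Defs
  imports Complex_Main "HOL-Library.Extended_Nat" "HOL-Library.Extended_Real"
begin

text \<open>A binary word of length n (an element of F_2^n) is represented by its support,
  a subset of {0..<n}.\<close>

definition hamming :: "nat set \<Rightarrow> nat set \<Rightarrow> nat" where
  "hamming u v = card ((u - v) \<union> (v - u))"

definition words :: "nat \<Rightarrow> nat \<Rightarrow> nat set set" where
  "words n w = {v. v \<subseteq> {..<n} \<and> card v = w}"

text \<open>Minimum distance, +infinity if the code has at most one word.\<close>
definition dmin :: "nat set set \<Rightarrow> enat" where
  "dmin S = (INF p \<in> {(u, v). u \<in> S \<and> v \<in> S \<and> u \<noteq> v}. enat (hamming (fst p) (snd p)))"

definition codes :: "nat \<Rightarrow> nat \<Rightarrow> nat \<Rightarrow> nat set set set" where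
  "codes n w k = {C. C \<subseteq> words n w \<and> card C \<le> k}"

definition codes_D :: "nat \<Rightarrow> nat \<Rightarrow> nat \<Rightarrow> nat set set \<Rightarrow> nat set set set" where
  "codes_D n w j D = {C \<in> codes n w j. D \<subseteq> C \<and> card D + 2 * card (C - D) \<le> j}"

definition psd_on :: "'a set \<Rightarrow> ('a \<Rightarrow> 'a \<Rightarrow> real) \<Rightarrow> bool" where
  "psd_on I M \<longleftrightarrow> (\<forall>i\<in>I. \<forall>j\<in>I. M i j = M j i) \<and>
     (\<forall>c :: 'a \<Rightarrow> real. 0 \<le> (\<Sum>i\<in>I. \<Sum>j\<in>I. c i * M i j * c j))"

definition moment_psd :: "nat \<Rightarrow> nat \<Rightarrow> nat \<Rightarrow> nat set set \<Rightarrow> (nat set set \<Rightarrow> real) \<Rightarrow> bool" where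
  "moment_psd n w j D x \<longleftrightarrow> psd_on (codes_D n w j D) (\<lambda>C C'. x (C \<union> C'))"

definition base_feasible :: "nat \<Rightarrow> nat \<Rightarrow> nat \<Rightarrow> nat \<Rightarrow> (nat set set \<Rightarrow> real) \<Rightarrow> bool" where
  "base_feasible k n d w x \<longleftrightarrow> x {} = 1 \<and>
     (\<forall>S \<in> codes n w k. dmin S < enat d \<longrightarrow> x S = 0)"

definition objective :: "nat \<Rightarrow> nat \<Rightarrow> (nat set set \<Rightarrow> real) \<Rightarrow> ereal" where
  "objective n w x = ereal (\<Sum>v \<in> words n w. x {v})"

definition A_bound :: "nat \<Rightarrow> nat \<Rightarrow> nat \<Rightarrow> nat \<Rightarrow> ereal" where
  "A_bound k n d w = Sup (objective n w ` {x. base_feasible k n d w x \<and>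
       (\<forall>D \<in> codes n w k. moment_psd n w k D x)})"

definition B_bound :: "nat \<Rightarrow> nat \<Rightarrow> nat \<Rightarrow> nat \<Rightarrow> ereal" where
  "B_bound k n d w = Sup (objective n w ` {x. base_feasible k n d w x \<and>
       (\<forall>D \<in> codes n w (k - 1). card D < 2 \<longrightarrow> moment_psd n w (k - 1) D x) \<and>
       (\<forall>D \<in> codes n w k. 2 \<le> card D \<longrightarrow> moment_psd n w k D x)})"

end

theory Submission
  imports Defs
begin

text \<open>Every moment matrix \<open>M\<^sub>j\<^sub>,\<^sub>D(x)\<close> only reads values \<open>x(S)\<close> with \<open>|S| \<le> j\<close>, and when
  \<open>j < |D| + 2\<close> it is the \<open>1\<times>1\<close> matrix \<open>(x(D))\<close>. Hence a solution of the \<open>B\<^sub>3\<close> program is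
  a solution of the \<open>A\<^sub>2\<close> program: the only extra constraints are \<open>M\<^sub>3\<^sub>,\<^sub>D \<succeq> 0\<close> for
  \<open>|D| \<in> {2, 3}\<close>, where they read \<open>x(D) \<ge> 0\<close>, and for \<open>|D| = 2\<close> this is also what
  \<open>M\<^sub>2\<^sub>,\<^sub>D \<succeq> 0\<close> says. Conversely, a solution of the \<open>A\<^sub>2\<close> program, extended by \<open>x(S) = 0\<close>
  for \<open>|S| = 3\<close>, is a solution of the \<open>B\<^sub>3\<close> program with the same objective value.\<close>

definition truncate :: "nat \<Rightarrow> (nat set set \<Rightarrow> real) \<Rightarrow> nat set set \<Rightarrow> real" where
  "truncate k x S = (if card S \<le> k then x S else 0)"

lemma finite_words: "finite (words n w)"
  by (rule finite_subset[of _ "Pow {..<n}"]) (auto simp: words_def)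

lemma codes_mono: "j \<le> k \<Longrightarrow> codes n w j \<subseteq> codes n w k"
  by (auto simp: codes_def)

lemma psd_on_singleton: "psd_on {i} M \<longleftrightarrow> 0 \<le> M i i"
proof
  assume "psd_on {i} M"
  then show "0 \<le> M i i"
    unfolding psd_on_def by (auto dest: spec[of _ "\<lambda>_. 1"])
next
  assume M: "0 \<le> M i i"
  have "0 \<le> c i * M i i * c i" for c :: "'a \<Rightarrow> real"
  proof -
    have "0 \<le> M i i * (c i * c i)"
      using M by (simp add: mult_nonneg_nonneg)
    also have "\<dots> = c i * M i i * c i"
      by (simp only: ac_simps)
    finally show ?thesis .
  qed
  then show "psd_on {i} M"
    by (simp add: psd_on_def)
qed

lemma psd_on_cong:
  "(\<And>i j. i \<in> I \<Longrightarrow> j \<in> I \<Longrightarrow> M i j = M' i j) \<Longrightarrow> psd_on I M = psd_on I M'"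
  unfolding psd_on_def by (simp cong: sum.cong)

lemma card_Un_codes_D_le:
  assumes "C \<in> codes_D n w j D" "C' \<in> codes_D n w j D"
  shows "card (C \<union> C') \<le> j"
proof -
  have "C \<union> C' = D \<union> (C - D) \<union> (C' - D)"
    using assms by (auto simp: codes_D_def)
  also have "card \<dots> \<le> card D + card (C - D) + card (C' - D)"
    by (meson add_le_mono card_Un_le order_refl order_trans)
  finally show ?thesis
    using assms by (auto simp: codes_D_def)
qed

lemma codes_D_eq_singleton:
  assumes "D \<in> codes n w j" "j < card D + 2"
  shows "codes_D n w j D = {D}"
proof -
  have "C = D" if "C \<in> codes_D n w j D" for C
  proof -
    have "finite C"
      using that finite_words by (auto simp: codes_D_def codes_def intro: finite_subset)
    moreover have "D \<subseteq> C" "card (C - D) = 0"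
      using that assms(2) by (auto simp: codes_D_def)
    ultimately show "C = D" by auto
  qed
  moreover have "D \<in> codes_D n w j D"
    using assms by (auto simp: codes_D_def codes_def)
  ultimately show ?thesis by blast
qed

lemma moment_psd_iff_nonneg:
  assumes "D \<in> codes n w j" "j < card D + 2"
  shows "moment_psd n w j D x \<longleftrightarrow> 0 \<le> x D"
  by (simp add: moment_psd_def codes_D_eq_singleton[OF assms] psd_on_singleton)

lemma moment_psd_truncate: "moment_psd n w j D (truncate j x) \<longleftrightarrow> moment_psd n w j D x"
  unfolding moment_psd_def
  by (rule psd_on_cong) (simp add: truncate_def card_Un_codes_D_le)

lemma base_feasible_mono:
  "base_feasible k n d w x \<Longrightarrow> j \<le> k \<Longrightarrow> base_feasible j n d w x"
  using codes_mono by (fastforce simp: base_feasible_def)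

lemma base_feasible_truncate:
  "base_feasible k n d w x \<Longrightarrow> base_feasible j n d w (truncate k x)"
  by (auto simp: base_feasible_def truncate_def codes_def)

lemma objective_truncate: "1 \<le> k \<Longrightarrow> objective n w (truncate k x) = objective n w x"
  by (simp add: objective_def truncate_def)

lemma B3_feasible_imp_A2_feasible:
  assumes "base_feasible 3 n d w x"
    and small: "\<forall>D \<in> codes n w 2. card D < 2 \<longrightarrow> moment_psd n w 2 D x"
    and large: "\<forall>D \<in> codes n w 3. 2 \<le> card D \<longrightarrow> moment_psd n w 3 D x"
  shows "base_feasible 2 n d w x \<and> (\<forall>D \<in> codes n w 2. moment_psd n w 2 D x)"
proof (intro conjI ballI)
  show "base_feasible 2 n d w x"
    using assms(1) by (rule base_feasible_mono) simp
  fix D assume D: "D \<in> codes n w 2"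
  show "moment_psd n w 2 D x"
  proof (cases "card D < 2")
    case False
    have D3: "D \<in> codes n w 3"
      using D by (auto simp: codes_def)
    with False large have "moment_psd n w 3 D x" by simp
    with False D D3 show ?thesis
      by (simp add: moment_psd_iff_nonneg)
  qed (use small D in blast)
qed

lemma A2_feasible_imp_B3_feasible_truncate:
  assumes "base_feasible 2 n d w x" and psd: "\<forall>D \<in> codes n w 2. moment_psd n w 2 D x"
  defines "y \<equiv> truncate 2 x"
  shows "base_feasible 3 n d w y \<and>
    (\<forall>D \<in> codes n w 2. card D < 2 \<longrightarrow> moment_psd n w 2 D y) \<and>
    (\<forall>D \<in> codes n w 3. 2 \<le> card D \<longrightarrow> moment_psd n w 3 D y)"
proof (intro conjI ballI impI)
  show "base_feasible 3 n d w y"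
    unfolding y_def using assms(1) by (rule base_feasible_truncate)
  show "moment_psd n w 2 D y" if "D \<in> codes n w 2" for D
    using psd that by (simp add: y_def moment_psd_truncate)
  fix D assume D: "D \<in> codes n w 3" "2 \<le> card D"
  have "0 \<le> y D"
  proof (cases "card D = 3")
    case False
    with D have D2: "D \<in> codes n w 2" and "card D = 2"
      by (auto simp: codes_def)
    have "moment_psd n w 2 D x"
      using psd D2 by blast
    with \<open>card D = 2\<close> have "0 \<le> x D"
      using moment_psd_iff_nonneg[OF D2] by simp
    with \<open>card D = 2\<close> show ?thesis
      by (simp add: y_def truncate_def)
  qed (simp add: y_def truncate_def)
  with D show "moment_psd n w 3 D y"
    by (simp add: moment_psd_iff_nonneg)
qed

theorem mainTheorem2:
  fixes n d w :: nat
  shows "B_bound 3 n d w = A_bound 2 n d w"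
proof -
  let ?B = "{x. base_feasible 3 n d w x \<and>
       (\<forall>D \<in> codes n w (3 - 1). card D < 2 \<longrightarrow> moment_psd n w (3 - 1) D x) \<and>
       (\<forall>D \<in> codes n w 3. 2 \<le> card D \<longrightarrow> moment_psd n w 3 D x)}"
  let ?A = "{x. base_feasible 2 n d w x \<and> (\<forall>D \<in> codes n w 2. moment_psd n w 2 D x)}"
  have "objective n w ` ?B \<subseteq> objective n w ` ?A"
    using B3_feasible_imp_A2_feasible by (intro image_mono) auto
  moreover have "objective n w ` ?A = objective n w ` truncate 2 ` ?A"
    unfolding image_image by (simp add: objective_truncate)
  moreover have "\<dots> \<subseteq> objective n w ` ?B"
    using A2_feasible_imp_B3_feasible_truncate by (intro image_mono) auto
  ultimately have "objective n w ` ?B = objective n w ` ?A"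
    by (rule subset_antisym[OF _ ord_eq_le_trans])
  then show ?thesis
    unfolding B_bound_def A_bound_def by (rule arg_cong)
qed

end
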